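(* Let $(\mathbf{W},\mathbf{b},\boldsymbol\rho)$ be a radial neural network with widths vector $\mathbf{n}=(n_0,\dots,n_L)$, weights $W_i\in\mathbb{R}^{n_i\times n_{i-1}}$, biases $b_i\in\mathbb{R}^{n_i}$ and radial rescaling activations $\rho_i=h_i^{(n_i)}$. Let $(\mathbf{W}^{\rm red},\mathbf{b}^{\rm red})$ be the weights and biases produced by the QR compression algorithm described below (for any choice of the complete QR decompositions in it). Then the feedforward function of $(\mathbf{W},\mathbf{b},\boldsymbol\rho)$ coincides with the feedforward function of the radial neural network $(\mathbf{W}^{\rm red},\mathbf{b}^{\rm red},\boldsymbol\rho^{\rm red})$ with widths vector $\mathbf{n}^{\rm red}$, where $\rho^{\rm red}_i=h_i^{(n^{\rm red}_i)}$ is the restriction of $\rho_i$ to $\mathbb{R}^{n^{\rm red}_i}\subseteq\mathbb{R}^{n_i}$.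
   Context: For $h:\mathbb{R}\to\mathbb{R}$ piecewise differentiable, $h^{(n)}:\mathbb{R}^n\to\mathbb{R}^n$ is $h^{(n)}(v)=h(|v|)v/|v|$ for $v\ne0$ and $h^{(n)}(0)=0$ (a radial rescaling function). A radial neural network with widths $(n_0,\dots,n_L)$ consists of $W_i\in\mathbb{R}^{n_i\times n_{i-1}}$, $b_i\in\mathbb{R}^{n_i}$ and radial rescaling functions $\rho_i$ on $\mathbb{R}^{n_i}$ ($i=1,\dots,L$); its feedforward function is $F=F_L$ with $F_0=\mathrm{id}_{\mathbb{R}^{n_0}}$, $F_i(x)=\rho_i(W_iF_{i-1}(x)+b_i)$. Reduced widths: $n^{\rm red}_0=n_0$, $n^{\rm red}_i=\min(n_i,n^{\rm red}_{i-1}+1)$ for $i=1,\dots,L-1$, $n^{\rm red}_L=n_L$. $\mathbb{R}^{k}$ is regarded as a subspace of $\mathbb{R}^{n}$ ($k\le n$) via the first $k$ coordinates; $\mathrm{Inc}_i\in\mathbb{R}^{n_i\times n^{\rm red}_i}$ is the matrix with ones on the main diagonal and zeros elsewhere. QR compression algorithm: set $A_1=[\,b_1\ W_1\,]\in\mathbb{R}^{n_1\times(n_0+1)}$. For $i=1,\dots,L-1$: compute a complete QR decomposition $A_i=Q_i\,\mathrm{Inc}_i\,R_i$ with $Q_i\in O(n_i)$ and $R_i$ upper triangular of size $n^{\rm red}_i\times(1+n^{\rm red}_{i-1})$; set $b^{\rm red}_i$ to be the first column of $R_i$ and $W^{\rm red}_i$ the remaining columns; set $A_{i+1}=[\,b_{i+1}\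 \ W_{i+1}Q_i\mathrm{Inc}_i\,]\in\mathbb{R}^{n_{i+1}\times(n^{\rm red}_i+1)}$. Finally $b^{\rm red}_L$ is the first column of $A_L$ and $W^{\rm red}_L$ the remaining columns. The algorithm also outputs $\mathbf{Q}=(Q_1,\dots,Q_{L-1})$. *)

theory Defs
  imports "Jordan_Normal_Form.Matrix"
begin

text \<open>Vectors in R^k are JNF vectors of dimension k; matrices in R^(m x k) are JNF
  matrices in carrier_mat m k.  Layers are indexed by 1..L via functions on nat.\<close>

definition vnorm :: "real vec \<Rightarrow> real" where
  "vnorm v = sqrt (v \<bullet> v)"

text \<open>Radial rescaling function h^(k) on R^k (k is the dimension of the argument):
  h^(k)(v) = h(|v|) v/|v| for v \<noteq> 0, and h^(k)(0) = 0.\<close>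
definition radial :: "(real \<Rightarrow> real) \<Rightarrow> real vec \<Rightarrow> real vec" where
  "radial h v = (if v = 0\<^sub>v (dim_vec v) then 0\<^sub>v (dim_vec v)
                 else (h (vnorm v) / vnorm v) \<cdot>\<^sub>v v)"

fun feedforward :: "(nat \<Rightarrow> real mat) \<Rightarrow> (nat \<Rightarrow> real vec) \<Rightarrow> (nat \<Rightarrow> real \<Rightarrow> real)
    \<Rightarrow> nat \<Rightarrow> real vec \<Rightarrow> real vec" where
  "feedforward W b h 0 x = x"
| "feedforward W b h (Suc i) x =
     radial (h (Suc i)) (W (Suc i) *\<^sub>v feedforward W b h i x + b (Suc i))"

definition radial_net :: "nat \<Rightarrow> (nat \<Rightarrow> nat) \<Rightarrow> (nat \<Rightarrow> real mat) \<Rightarrow> (nat \<Rightarrow> real vec) \<Rightarrow> bool"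
  where "radial_net L n W b \<longleftrightarrow>
    (\<forall>i\<in>{1..L}. W i \<in> carrier_mat (n i) (n (i - 1)) \<and> b i \<in> carrier_vec (n i))"

fun nred :: "(nat \<Rightarrow> nat) \<Rightarrow> nat \<Rightarrow> nat \<Rightarrow> nat" where
  "nred n L 0 = n 0"
| "nred n L (Suc i) = (if Suc i = L then n L else min (n (Suc i)) (nred n L i + 1))"

definition Inc :: "nat \<Rightarrow> nat \<Rightarrow> real mat" where
  "Inc m k = mat m k (\<lambda>(i, j). if i = j then 1 else 0)"

definition orth_group :: "nat \<Rightarrow> real mat set" where
  "orth_group m = {Q. Q \<in> carrier_mat m m \<and> transpose_mat Q * Q = 1\<^sub>m m}"

definition augment :: "real vec \<Rightarrow> real mat \<Rightarrow> real mat" where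
  "augment v M = mat (dim_vec v) (dim_col M + 1)
      (\<lambda>(i, j). if j = 0 then v $ i else M $$ (i, j - 1))"

definition first_col :: "real mat \<Rightarrow> real vec" where
  "first_col M = col M 0"

definition rest_cols :: "real mat \<Rightarrow> real mat" where
  "rest_cols M = mat (dim_row M) (dim_col M - 1) (\<lambda>(i, j). M $$ (i, j + 1))"

text \<open>The run of the QR compression algorithm with chosen complete QR decompositions
  A_i = Q_i Inc_i R_i (i = 1..L-1).\<close>
definition qr_compression_run ::
  "nat \<Rightarrow> (nat \<Rightarrow> nat) \<Rightarrow> (nat \<Rightarrow> real mat) \<Rightarrow> (nat \<Rightarrow> real vec)
   \<Rightarrow> (nat \<Rightarrow> real mat) \<Rightarrow> (nat \<Rightarrow> real mat) \<Rightarrow> (nat \<Rightarrow> real mat) \<Rightarrow> bool" where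
  "qr_compression_run L n W b A Q R \<longleftrightarrow>
     A 1 = augment (b 1) (W 1) \<and>
     (\<forall>i\<in>{1..<L}.
        Q i \<in> orth_group (n i) \<and>
        R i \<in> carrier_mat (nred n L i) (1 + nred n L (i - 1)) \<and>
        upper_triangular (R i) \<and>
        A i = Q i * Inc (n i) (nred n L i) * R i \<and>
        A (i + 1) = augment (b (i + 1)) (W (i + 1) * Q i * Inc (n i) (nred n L i)))"

definition W_red :: "nat \<Rightarrow> (nat \<Rightarrow> real mat) \<Rightarrow> (nat \<Rightarrow> real mat) \<Rightarrow> nat \<Rightarrow> real mat" where
  "W_red L A R i = (if i < L then rest_cols (R i) else rest_cols (A L))"

definition b_red :: "nat \<Rightarrow> (nat \<Rightarrow> real mat) \<Rightarrow> (nat \<Rightarrow> real mat) \<Rightarrow> nat \<Rightarrow> real vec" where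
  "b_red L A R i = (if i < L then first_col (R i) else first_col (A L))"

end

theory Submission
  imports Defs
begin

text \<open>
  Read the pre-activation W_(i+1) F_i(x) + b_(i+1) of the original network in homogeneous
  coordinates as A_(i+1) (1, G_i(x)), where G is the feedforward function of the compressed
  network.  For a hidden layer the QR step factors A_i = P_i R_i with P_i = Q_i Inc_i having
  orthonormal columns.  A radial rescaling only sees the norm, so it commutes with such an
  isometric embedding, whence F_i(x) = P_i G_i(x); substituting this into the next layer
  yields exactly A_(i+1) = [b_(i+1)  W_(i+1) P_i].  At the output layer A_L is itself
  [b_red_L  W_red_L], so the two networks agree.
\<close>

definition isometry_mat :: "nat \<Rightarrow> nat \<Rightarrow> real mat \<Rightarrow> bool" where
  "isometry_mat m k P \<longleftrightarrow> P \<in> carrier_mat m k \<and> transpose_mat P * P = 1\<^sub>m k"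

lemma orth_group_iff_isometry_mat: "Q \<in> orth_group m \<longleftrightarrow> isometry_mat m m Q"
  by (simp add: orth_group_def isometry_mat_def)

lemma isometry_mat_carrier: "isometry_mat m k P \<Longrightarrow> P \<in> carrier_mat m k"
  by (simp add: isometry_mat_def)

lemma isometry_mat_mult:
  assumes P: "isometry_mat m k P" and S: "isometry_mat k l S"
  shows "isometry_mat m l (P * S)"
proof -
  have Pc: "P \<in> carrier_mat m k" and Sc: "S \<in> carrier_mat k l"
    using P S by (auto simp: isometry_mat_def)
  have "transpose_mat (P * S) * (P * S) = transpose_mat S * (transpose_mat P * (P * S))"
    using Pc Sc by (simp add: transpose_mult assoc_mult_mat[of _ l k _ m _ l])
  also have "\<dots> = transpose_mat S * ((transpose_mat P * P) * S)"
    using Pc Sc by (simp add: assoc_mult_mat[of _ k m _ k _ l])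
  also have "\<dots> = 1\<^sub>m l"
    using P S Sc by (simp add: isometry_mat_def)
  finally show ?thesis using Pc Sc by (simp add: isometry_mat_def)
qed

lemma Inc_carrier: "Inc m k \<in> carrier_mat m k"
  by (simp add: Inc_def)

lemma isometry_mat_Inc:
  assumes "k \<le> m"
  shows "isometry_mat m k (Inc m k)"
proof -
  have "(transpose_mat (Inc m k) * Inc m k) $$ (i, j) = 1\<^sub>m k $$ (i, j)"
    if "i < k" and "j < k" for i j
  proof -
    have "(transpose_mat (Inc m k) * Inc m k) $$ (i, j)
        = (\<Sum>l\<in>{0..<m}. (if l = i then 1 else 0) * (if l = j then 1 else 0))"
      using that assms by (simp add: Inc_def scalar_prod_def)
    also have "\<dots> = (\<Sum>l\<in>{0..<m}. if l = i then (if i = j then 1 else 0) else 0)"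
      by (rule sum.cong) auto
    finally show ?thesis using that assms by simp
  qed
  then show ?thesis
    by (auto simp: isometry_mat_def Inc_def intro!: eq_matI)
qed

lemma scalar_prod_isometry_mat:
  assumes P: "isometry_mat m k P" and v: "v \<in> carrier_vec k"
  shows "(P *\<^sub>v v) \<bullet> (P *\<^sub>v v) = v \<bullet> v"
proof -
  have Pc: "P \<in> carrier_mat m k" using isometry_mat_carrier[OF P] .
  have "(P *\<^sub>v v) \<bullet> (P *\<^sub>v v) = (transpose_mat P *\<^sub>v (P *\<^sub>v v)) \<bullet> v"
    using Pc v by (simp add: transpose_vec_mult_scalar)
  also have "transpose_mat P *\<^sub>v (P *\<^sub>v v) = v"
    using P v by (simp add: isometry_mat_def flip: assoc_mult_mat_vec[of _ k m _ k])
  finally show ?thesis .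
qed

lemma self_scalar_prod_eq_0_iff:
  fixes v :: "real vec"
  shows "v \<bullet> v = 0 \<longleftrightarrow> v = 0\<^sub>v (dim_vec v)"
  using conjugate_square_eq_0_vec[of v "dim_vec v"]
  by (simp add: scalar_prod_def conjugate_vec_def)

lemma dim_radial [simp]: "dim_vec (radial h v) = dim_vec v"
  by (simp add: radial_def)

lemma mult_mat_zero_vec:
  "P \<in> carrier_mat m k \<Longrightarrow> P *\<^sub>v 0\<^sub>v k = (0\<^sub>v m :: 'a :: semiring_0 vec)"
  by (intro eq_vecI) (auto simp: row_def)

lemma radial_isometry_mat:
  assumes P: "isometry_mat m k P" and v: "v \<in> carrier_vec k"
  shows "radial h (P *\<^sub>v v) = P *\<^sub>v radial h v"
proof -
  have Pc: "P \<in> carrier_mat m k" using isometry_mat_carrier[OF P] .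
  show ?thesis
  proof (cases "v = 0\<^sub>v k")
    case True
    then show ?thesis using Pc by (simp add: radial_def mult_mat_zero_vec)
  next
    case False
    have scalar: "(P *\<^sub>v v) \<bullet> (P *\<^sub>v v) = v \<bullet> v"
      using scalar_prod_isometry_mat[OF P v] .
    then have "vnorm (P *\<^sub>v v) = vnorm v"
      by (simp add: vnorm_def)
    moreover have "P *\<^sub>v v \<noteq> 0\<^sub>v m"
      using scalar False v Pc self_scalar_prod_eq_0_iff
      by (metis carrier_matD(1) carrier_vecD dim_mult_mat_vec)
    ultimately show ?thesis
      using False Pc v by (simp add: radial_def mult_mat_vec)
  qed
qed

lemma first_col_carrier: "R \<in> carrier_mat r (Suc k) \<Longrightarrow> first_col R \<in> carrier_vec r"
  unfolding first_col_def by (rule col_carrier_vec) simp_all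

lemma rest_cols_carrier: "R \<in> carrier_mat r (Suc k) \<Longrightarrow> rest_cols R \<in> carrier_mat r k"
  unfolding rest_cols_def by (metis carrier_matD diff_Suc_1 mat_carrier)

lemma mult_vCons_one:
  assumes R: "R \<in> carrier_mat r (Suc k)" and y: "y \<in> carrier_vec k"
  shows "R *\<^sub>v vCons 1 y = rest_cols R *\<^sub>v y + first_col R"
proof (rule eq_vecI)
  fix i assume "i < dim_vec (rest_cols R *\<^sub>v y + first_col R)"
  then have i: "i < r" using R by (simp add: first_col_def)
  have "(R *\<^sub>v vCons 1 y) $ i = (\<Sum>j\<in>{0..<Suc k}. R $$ (i, j) * vCons 1 y $ j)"
    using R i y by (simp add: scalar_prod_def)
  also have "\<dots> = (\<Sum>j\<in>{0..<k}. R $$ (i, Suc j) * y $ j) + R $$ (i, 0)"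
    by (subst sum.atLeast0_lessThan_Suc_shift) simp
  also have "\<dots> = (rest_cols R *\<^sub>v y + first_col R) $ i"
    using R i y by (simp add: first_col_def rest_cols_def scalar_prod_def)
  finally show "(R *\<^sub>v vCons 1 y) $ i = (rest_cols R *\<^sub>v y + first_col R) $ i" .
qed (use R in \<open>simp add: first_col_def\<close>)

lemma augment_carrier:
  "M \<in> carrier_mat r k \<Longrightarrow> v \<in> carrier_vec r \<Longrightarrow> augment v M \<in> carrier_mat r (Suc k)"
  by (simp add: augment_def)

lemma first_col_augment: "v \<in> carrier_vec r \<Longrightarrow> first_col (augment v M) = v"
  by (auto simp: augment_def first_col_def)

lemma rest_cols_augment:
  "M \<in> carrier_mat r k \<Longrightarrow> v \<in> carrier_vec r \<Longrightarrow> rest_cols (augment v M) = M"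
  by (auto simp: augment_def rest_cols_def)

lemma augment_mult_vCons_one:
  assumes "M \<in> carrier_mat r k" and "v \<in> carrier_vec r" and "y \<in> carrier_vec k"
  shows "augment v M *\<^sub>v vCons 1 y = M *\<^sub>v y + v"
  using mult_vCons_one[OF augment_carrier] first_col_augment rest_cols_augment assms by metis

(* Keeps nred n L (Suc i) folded, so that the carrier facts below match syntactically. *)
declare nred.simps(2) [simp del]

lemma nred_le: "nred n L i \<le> n i"
  by (cases i) (auto simp: nred.simps)

lemma nred_last: "0 < L \<Longrightarrow> nred n L L = n L"
  by (cases L) (auto simp: nred.simps)

lemma radial_netD:
  assumes "radial_net L n W b" and "i < L"
  shows "W (Suc i) \<in> carrier_mat (n (Suc i)) (n i)" and "b (Suc i) \<in> carrier_vec (n (Suc i))"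
proof -
  have "Suc i \<in> {1..L}" using \<open>i < L\<close> by simp
  then have "W (Suc i) \<in> carrier_mat (n (Suc i)) (n (Suc i - 1)) \<and>
      b (Suc i) \<in> carrier_vec (n (Suc i))"
    using assms(1) unfolding radial_net_def by blast
  then show "W (Suc i) \<in> carrier_mat (n (Suc i)) (n i)" and "b (Suc i) \<in> carrier_vec (n (Suc i))"
    by simp_all
qed

lemma feedforward_carrier:
  assumes net: "radial_net L n W b" and "i \<le> L" and x: "x \<in> carrier_vec (n 0)"
  shows "feedforward W b h i x \<in> carrier_vec (n i)"
  using \<open>i \<le> L\<close>
proof (induction i)
  case (Suc i)
  then have "W (Suc i) *\<^sub>v feedforward W b h i x + b (Suc i) \<in> carrier_vec (n (Suc i))"
    using radial_netD[OF net, of i] by simp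
  then show ?case
    by (metis carrier_vecD carrier_vecI dim_radial feedforward.simps(2))
qed (use x in simp)

locale qr_compression =
  fixes L :: nat and n :: "nat \<Rightarrow> nat"
    and W :: "nat \<Rightarrow> real mat" and b :: "nat \<Rightarrow> real vec"
    and A Q R :: "nat \<Rightarrow> real mat"
  assumes layers: "1 \<le> L"
    and net: "radial_net L n W b"
    and run: "qr_compression_run L n W b A Q R"
begin

abbreviation feedforward_red :: "(nat \<Rightarrow> real \<Rightarrow> real) \<Rightarrow> nat \<Rightarrow> real vec \<Rightarrow> real vec"
  where
  "feedforward_red \<equiv> feedforward (W_red L A R) (b_red L A R)"

definition embedding :: "nat \<Rightarrow> real mat" where
  "embedding i = Q i * Inc (n i) (nred n L i)"

definition augmented_red :: "nat \<Rightarrow> real mat" where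
  "augmented_red i = (if i < L then R i else A L)"

lemma W_red_eq: "W_red L A R i = rest_cols (augmented_red i)"
  by (simp add: W_red_def augmented_red_def)

lemma b_red_eq: "b_red L A R i = first_col (augmented_red i)"
  by (simp add: b_red_def augmented_red_def)

lemma A_1: "A 1 = augment (b 1) (W 1)"
  using run by (simp add: qr_compression_run_def)

lemma embedding_isometry:
  assumes "1 \<le> i" and "i < L"
  shows "isometry_mat (n i) (nred n L i) (embedding i)"
proof -
  have "Q i \<in> orth_group (n i)"
    using run assms by (simp add: qr_compression_run_def)
  then show ?thesis
    unfolding embedding_def orth_group_iff_isometry_mat
    using isometry_mat_mult isometry_mat_Inc nred_le by blast
qed

lemma R_carrier:
  assumes "1 \<le> i" and "i < L"
  shows "R i \<in> carrier_mat (nred n L i) (Suc (nred n L (i - 1)))"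
  using run assms by (simp add: qr_compression_run_def)

lemma A_factorization:
  assumes "1 \<le> i" and "i < L"
  shows "A i = embedding i * R i"
  using run assms by (simp add: qr_compression_run_def embedding_def)

lemma A_Suc:
  assumes "1 \<le> i" and "i < L"
  shows "A (Suc i) = augment (b (Suc i)) (W (Suc i) * embedding i)"
proof -
  have "W (Suc i) \<in> carrier_mat (n (Suc i)) (n i)"
    using radial_netD(1)[OF net] assms by simp
  moreover have "Q i \<in> carrier_mat (n i) (n i)"
    using run assms by (simp add: qr_compression_run_def orth_group_def)
  moreover have
    "A (Suc i) = augment (b (Suc i)) (W (Suc i) * Q i * Inc (n i) (nred n L i))"
    using run assms by (simp add: qr_compression_run_def)
  ultimately show ?thesis
    by (simp add: embedding_def assoc_mult_mat[OF _ _ Inc_carrier])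
qed

lemma A_carrier:
  assumes "i < L"
  shows "A (Suc i) \<in> carrier_mat (n (Suc i)) (Suc (nred n L i))"
proof (cases i)
  case 0
  then show ?thesis
    using A_1 augment_carrier radial_netD[OF net] assms by (simp add: nred.simps)
next
  case (Suc j)
  have "embedding i \<in> carrier_mat (n i) (nred n L i)"
    using embedding_isometry isometry_mat_carrier Suc assms by simp
  moreover have "W (Suc i) \<in> carrier_mat (n (Suc i)) (n i)"
    and "b (Suc i) \<in> carrier_vec (n (Suc i))"
    using radial_netD[OF net] assms by simp_all
  ultimately show ?thesis
    using A_Suc[of i] augment_carrier mult_carrier_mat Suc assms by simp
qed

lemma augmented_red_carrier:
  assumes "i < L"
  shows "augmented_red (Suc i) \<in> carrier_mat (nred n L (Suc i)) (Suc (nred n L i))"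
proof (cases "Suc i < L")
  case True
  then show ?thesis using R_carrier[of "Suc i"] by (simp add: augmented_red_def)
next
  case False
  then have "Suc i = L" using assms by simp
  then show ?thesis
    using A_carrier[OF assms] nred_last[of L n] layers by (simp add: augmented_red_def)
qed

lemma radial_net_red: "radial_net L (nred n L) (W_red L A R) (b_red L A R)"
  unfolding radial_net_def
proof
  fix i assume "i \<in> {1..L}"
  then obtain j where "i = Suc j" "j < L" by (cases i) auto
  then have "augmented_red i \<in> carrier_mat (nred n L i) (Suc (nred n L (i - 1)))"
    using augmented_red_carrier by simp
  then show "W_red L A R i \<in> carrier_mat (nred n L i) (nred n L (i - 1)) \<and>
      b_red L A R i \<in> carrier_vec (nred n L i)"
    using rest_cols_carrier first_col_carrier by (simp add: W_red_eq b_red_eq)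
qed

lemma feedforward_red_carrier:
  assumes "i \<le> L" and "x \<in> carrier_vec (n 0)"
  shows "feedforward_red h i x \<in> carrier_vec (nred n L i)"
  using feedforward_carrier[OF radial_net_red] assms by (simp add: nred.simps)

lemma preactivation_red:
  assumes "i < L" and "y \<in> carrier_vec (nred n L i)"
  shows "W_red L A R (Suc i) *\<^sub>v y + b_red L A R (Suc i)
       = augmented_red (Suc i) *\<^sub>v vCons 1 y"
  using mult_vCons_one[OF augmented_red_carrier] assms by (simp add: W_red_eq b_red_eq)

lemma radial_A_factorization:
  assumes "Suc i < L" and "y \<in> carrier_vec (nred n L i)"
  shows "radial h (A (Suc i) *\<^sub>v vCons 1 y)
       = embedding (Suc i) *\<^sub>v radial h (augmented_red (Suc i) *\<^sub>v vCons 1 y)"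
proof -
  have P: "isometry_mat (n (Suc i)) (nred n L (Suc i)) (embedding (Suc i))"
    using embedding_isometry assms by simp
  have Rc: "R (Suc i) \<in> carrier_mat (nred n L (Suc i)) (Suc (nred n L i))"
    using R_carrier[of "Suc i"] assms by simp
  have "A (Suc i) *\<^sub>v vCons 1 y = embedding (Suc i) *\<^sub>v (R (Suc i) *\<^sub>v vCons 1 y)"
    using A_factorization isometry_mat_carrier[OF P] Rc assms by simp
  then show ?thesis
    using radial_isometry_mat[OF P] Rc assms by (simp add: augmented_red_def)
qed

lemma preactivation_embedding:
  assumes "1 \<le> i" and "i < L" and z: "z \<in> carrier_vec (nred n L i)"
  shows "W (Suc i) *\<^sub>v (embedding i *\<^sub>v z) + b (Suc i) = A (Suc i) *\<^sub>v vCons 1 z"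
proof -
  have P: "embedding i \<in> carrier_mat (n i) (nred n L i)"
    using embedding_isometry isometry_mat_carrier assms by simp
  have W: "W (Suc i) \<in> carrier_mat (n (Suc i)) (n i)"
    and b: "b (Suc i) \<in> carrier_vec (n (Suc i))"
    using radial_netD[OF net] assms by simp_all
  have "A (Suc i) *\<^sub>v vCons 1 z = (W (Suc i) * embedding i) *\<^sub>v z + b (Suc i)"
    using A_Suc augment_mult_vCons_one[OF mult_carrier_mat[OF W P] b z] assms by simp
  then show ?thesis using W P z by simp
qed

lemma preactivation_A:
  assumes x: "x \<in> carrier_vec (n 0)" and "i < L"
  shows "W (Suc i) *\<^sub>v feedforward W b h i x + b (Suc i)
       = A (Suc i) *\<^sub>v vCons 1 (feedforward_red h i x)"
  using \<open>i < L\<close>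
proof (induction i)
  case 0
  then show ?case
    using A_1 augment_mult_vCons_one[OF radial_netD[OF net] x] by simp
next
  case (Suc i)
  have y: "feedforward_red h i x \<in> carrier_vec (nred n L i)"
    using feedforward_red_carrier Suc.prems x by simp
  have "feedforward W b h (Suc i) x
      = radial (h (Suc i)) (A (Suc i) *\<^sub>v vCons 1 (feedforward_red h i x))"
    using Suc by simp
  also have "\<dots> = embedding (Suc i) *\<^sub>v feedforward_red h (Suc i) x"
    using radial_A_factorization preactivation_red y Suc.prems by simp
  finally have F:
    "feedforward W b h (Suc i) x = embedding (Suc i) *\<^sub>v feedforward_red h (Suc i) x" .
  have "feedforward_red h (Suc i) x \<in> carrier_vec (nred n L (Suc i))"
    using Suc.prems by (intro feedforward_red_carrier x) simp
  then show ?case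
    unfolding F using Suc.prems by (intro preactivation_embedding) simp_all
qed

lemma feedforward_eq_feedforward_red:
  assumes x: "x \<in> carrier_vec (n 0)"
  shows "feedforward W b h L x = feedforward_red h L x"
proof -
  obtain j where j: "j < L" "Suc j = L" using layers by (cases L) auto
  have "feedforward W b h L x = radial (h L) (A L *\<^sub>v vCons 1 (feedforward_red h j x))"
    using feedforward.simps(2)[of W b h j x] preactivation_A[OF x j(1)] j(2) by simp
  also have "A L = augmented_red L"
    by (simp add: augmented_red_def)
  also have "radial (h L) (augmented_red L *\<^sub>v vCons 1 (feedforward_red h j x))
      = feedforward_red h L x"
    using feedforward.simps(2)[of "W_red L A R" "b_red L A R" h j x]
      preactivation_red[OF j(1) feedforward_red_carrier[OF _ x]] j by simp
  finally show ?thesis .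
qed

end

theorem theorem3:
  fixes L :: nat and n :: "nat \<Rightarrow> nat"
    and W :: "nat \<Rightarrow> real mat" and b :: "nat \<Rightarrow> real vec"
    and h :: "nat \<Rightarrow> real \<Rightarrow> real"
    and A Q R :: "nat \<Rightarrow> real mat"
  assumes "1 \<le> L"
    and "radial_net L n W b"
    and "qr_compression_run L n W b A Q R"
  shows "radial_net L (nred n L) (W_red L A R) (b_red L A R) \<and>
         (\<forall>x \<in> carrier_vec (n 0).
            feedforward W b h L x = feedforward (W_red L A R) (b_red L A R) h L x)"
proof -
  interpret qr_compression L n W b A Q R
    using assms by unfold_locales
  show ?thesis
    using radial_net_red feedforward_eq_feedforward_red by blast
qed

end
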